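(* Let $R$ be a commutative ring in which $2$ is invertible, $I$ an ideal of $R$, $m\ge1$, and let $(Q,q)$ be a quadratic space over $R$ of rank $2m-1$ having an ordered basis $\mathcal{B}$ with respect to which the matrix of $\langle\,,\,\rangle$ is $(2)\perp\widetilde{\psi}_{m-1}$. Identify automorphisms of $Q\perp\mathbb{H}(R)$ with matrices in $\mathrm{GL}_{2m+1}(R)$ via the ordered basis $\mathcal{B}$ followed by $x,f$ (with respect to which the form has matrix $(2)\perp\widetilde{\psi}_m$). Then $\mathrm{EO}_{(R,I)}(Q,\mathbb{H}(R))=\mathrm{EO}_{2m+1}(R,I)$.
   Context: For a quadratic form $q$ the bilinear form is $\langle x,y\rangle=q(x+y)-q(x)-q(y)$ (so $\langle x,x\rangle=2q(x)$); a quadratic space is a finitely generated projective module with non-degenerate such form ($z\mapsto\langle z,-\rangle$ an isomorphism onto the dual). $\mathbb{H}(R)=Rx\oplus Rf$ with $q(ax+bf)=ab$; orthogonal sums carry the sum of forms. $\widetilde{\psi}_s=\sum_{i=1}^s(e_{2i-1,2i}+e_{2i,2i-1})$ ($e_{i,j}$ matrix units; $\widetilde\psi_0$ is empty). DSER transformations on $Q\perp\mathbb{H}(P)$ ($\mathbb{H}(P)=P\oplus P^*$, $q(y,g)=g(y)$): for $\alpha:Q\to P$ let $\alpha^*:P^*\to Q$ satisfy $\langle\alpha^*(g),z\rangle=g(\alpha(z))$, $E_\alpha(z,y,g)=(z-\alpha^*(g),y+\alpha(z)-\tfrac12\alpha\alpha^*(g),g)$; for $\beta:Q\to P^*$ let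 $\beta^*:P\to Q$ satisfy $\langle\beta^*(y),z\rangle=\beta(z)(y)$, $E^*_\beta(z,y,g)=(z-\beta^*(y),y,g+\beta(z)-\tfrac12\beta\beta^*(y))$. $\mathrm{EO}_R(Q,\mathbb{H}(P))$ is generated by all $E_\alpha,E^*_\beta$; $\mathrm{EO}_I(Q,\mathbb{H}(P))$ by those with $\alpha(Q)\subseteq IP$, $\beta(Q)\subseteq IP^*$; $\mathrm{EO}_{(R,I)}(Q,\mathbb{H}(P))$ is its normal closure in $\mathrm{EO}_R(Q,\mathbb{H}(P))$. Odd elementary orthogonal group: for $N=2s+1$ and $1\le i\le s$, $F^1_i(\lambda)=I_N+\lambda(e_{1,2i+1}-2e_{2i,1}-\lambda e_{2i,2i+1})$, $F^2_i(\lambda)=I_N+\lambda(e_{1,2i}-2e_{2i+1,1}-\lambda e_{2i+1,2i})$. $\mathrm{EO}_{2s+1}(R)$ is generated by these with $\lambda\in R$, $\mathrm{EO}_{2s+1}(I)$ by those with $\lambda\in I$, and $\mathrm{EO}_{2s+1}(R,I)$ is the normal closure of $\mathrm{EO}_{2s+1}(I)$ in $\mathrm{EO}_{2s+1}(R)$. *)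

theory Defs
  imports Main
begin

text \<open>Vectors are functions
nat => 'a and square matrices of size N are functions nat => nat => 'a, both
1-indexed (indices 1..N) as in the paper; entries outside the range are 0.\<close>

definition is_ideal :: "'a::comm_ring_1 set \<Rightarrow> bool" where
  "is_ideal I \<longleftrightarrow> 0 \<in> I \<and> (\<forall>x\<in>I. \<forall>y\<in>I. x + y \<in> I) \<and> (\<forall>r x. x \<in> I \<longrightarrow> r * x \<in> I)"

text \<open>The element 1/2 of R (meaningful when 2 is invertible).\<close>
definition half :: "'a::comm_ring_1" where
  "half = (THE u. 2 * u = 1)"

definition idm :: "nat \<Rightarrow> nat \<Rightarrow> nat \<Rightarrow> 'a::comm_ring_1" where
  "idm N i j = (if i = j \<and> i \<in> {1..N} then 1 else 0)"

definition emat :: "nat \<Rightarrow> nat \<Rightarrow> nat \<Rightarrow> nat \<Rightarrow> nat \<Rightarrow> 'a::comm_ring_1" where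
  "emat N k l i j = (if i = k \<and> j = l \<and> i \<in> {1..N} \<and> j \<in> {1..N} then 1 else 0)"

definition mmul :: "nat \<Rightarrow> (nat \<Rightarrow> nat \<Rightarrow> 'a::comm_ring_1) \<Rightarrow> (nat \<Rightarrow> nat \<Rightarrow> 'a) \<Rightarrow> nat \<Rightarrow> nat \<Rightarrow> 'a" where
  "mmul N A B i j = (if i \<in> {1..N} \<and> j \<in> {1..N} then (\<Sum>k = 1..N. A i k * B k j) else 0)"

inductive_set gen_group :: "nat \<Rightarrow> (nat \<Rightarrow> nat \<Rightarrow> 'a::comm_ring_1) set \<Rightarrow> (nat \<Rightarrow> nat \<Rightarrow> 'a) set"
  for N S where
  gen_id: "idm N \<in> gen_group N S"
| gen_mul: "A \<in> gen_group N S \<Longrightarrow> g \<in> S \<Longrightarrow> mmul N A g \<in> gen_group N S"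
| gen_mul_inv: "A \<in> gen_group N S \<Longrightarrow> g \<in> S \<Longrightarrow> mmul N g h = idm N \<Longrightarrow> mmul N h g = idm N
     \<Longrightarrow> mmul N A h \<in> gen_group N S"

definition normal_closure :: "nat \<Rightarrow> (nat \<Rightarrow> nat \<Rightarrow> 'a::comm_ring_1) set \<Rightarrow> (nat \<Rightarrow> nat \<Rightarrow> 'a) set \<Rightarrow> (nat \<Rightarrow> nat \<Rightarrow> 'a) set" where
  "normal_closure N G H = gen_group N
     {mmul N (mmul N g h) g' | g h g'. g \<in> G \<and> h \<in> H \<and> mmul N g g' = idm N \<and> mmul N g' g = idm N}"

definition F1 :: "nat \<Rightarrow> nat \<Rightarrow> 'a::comm_ring_1 \<Rightarrow> nat \<Rightarrow> nat \<Rightarrow> 'a" where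
  "F1 s i c = (let N = 2*s+1 in
     (\<lambda>a b. idm N a b + c * (emat N 1 (2*i+1) a b - 2 * emat N (2*i) 1 a b - c * emat N (2*i) (2*i+1) a b)))"

definition F2 :: "nat \<Rightarrow> nat \<Rightarrow> 'a::comm_ring_1 \<Rightarrow> nat \<Rightarrow> nat \<Rightarrow> 'a" where
  "F2 s i c = (let N = 2*s+1 in
     (\<lambda>a b. idm N a b + c * (emat N 1 (2*i) a b - 2 * emat N (2*i+1) 1 a b - c * emat N (2*i+1) (2*i) a b)))"

definition EO_gens :: "nat \<Rightarrow> 'a::comm_ring_1 set \<Rightarrow> (nat \<Rightarrow> nat \<Rightarrow> 'a) set" where
  "EO_gens s J = {F1 s i c | i c. i \<in> {1..s} \<and> c \<in> J} \<union> {F2 s i c | i c. i \<in> {1..s} \<and> c \<in> J}"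

definition EO_odd :: "nat \<Rightarrow> (nat \<Rightarrow> nat \<Rightarrow> 'a::comm_ring_1) set" where
  "EO_odd s = gen_group (2*s+1) (EO_gens s UNIV)"

definition EO_odd_ideal :: "nat \<Rightarrow> 'a::comm_ring_1 set \<Rightarrow> (nat \<Rightarrow> nat \<Rightarrow> 'a) set" where
  "EO_odd_ideal s I = gen_group (2*s+1) (EO_gens s I)"

definition EO_odd_rel :: "nat \<Rightarrow> 'a::comm_ring_1 set \<Rightarrow> (nat \<Rightarrow> nat \<Rightarrow> 'a) set" where
  "EO_odd_rel s I = normal_closure (2*s+1) (EO_odd s) (EO_odd_ideal s I)"

definition psi_tilde :: "nat \<Rightarrow> nat \<Rightarrow> nat \<Rightarrow> 'a::comm_ring_1" where
  "psi_tilde s i j = (if \<exists>k\<in>{1..s}. (i = 2*k-1 \<and> j = 2*k) \<or> (i = 2*k \<and> j = 2*k-1) then 1 else 0)"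

definition gramQ :: "nat \<Rightarrow> nat \<Rightarrow> nat \<Rightarrow> 'a::comm_ring_1" where
  "gramQ m i j = (if i = 1 \<and> j = 1 then 2
                  else if i \<ge> 2 \<and> j \<ge> 2 then psi_tilde (m-1) (i-1) (j-1) else 0)"

text \<open>Elements of Q = coordinate vectors w.r.t. B, supported on 1..2m-1\<close>
definition isQ :: "nat \<Rightarrow> (nat \<Rightarrow> 'a::comm_ring_1) \<Rightarrow> bool" where
  "isQ m z \<longleftrightarrow> (\<forall>k. k \<notin> {1..2*m-1} \<longrightarrow> z k = 0)"

definition bilQ :: "nat \<Rightarrow> (nat \<Rightarrow> 'a::comm_ring_1) \<Rightarrow> (nat \<Rightarrow> 'a) \<Rightarrow> 'a" where
  "bilQ m z w = (\<Sum>i = 1..2*m-1. \<Sum>j = 1..2*m-1. z i * gramQ m i j * w j)"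

definition linQ :: "nat \<Rightarrow> (nat \<Rightarrow> 'a::comm_ring_1) \<Rightarrow> (nat \<Rightarrow> 'a) \<Rightarrow> 'a" where
  "linQ m a z = (\<Sum>k = 1..2*m-1. a k * z k)"

text \<open>With P = R and P^* identified with R via g |-> g(1), this gives alpha^*(g) = adjQ m alpha g
  and beta^*(y) = adjQ m beta y (as beta(z)(y) = beta(z)(1) * y).\<close>
definition adjQ :: "nat \<Rightarrow> ((nat \<Rightarrow> 'a::comm_ring_1) \<Rightarrow> 'a) \<Rightarrow> 'a \<Rightarrow> nat \<Rightarrow> 'a" where
  "adjQ m F c = (THE w. isQ m w \<and> (\<forall>z. isQ m z \<longrightarrow> bilQ m w z = c * F z))"

text \<open>Q-component of a vector of Q \<perp> H(R); coordinates: 1..2m-1 for B, 2m for x, 2m+1 for f\<close>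
definition zpart :: "nat \<Rightarrow> (nat \<Rightarrow> 'a::comm_ring_1) \<Rightarrow> nat \<Rightarrow> 'a" where
  "zpart m v = (\<lambda>k. if k \<in> {1..2*m-1} then v k else 0)"

definition E_alpha :: "nat \<Rightarrow> ((nat \<Rightarrow> 'a::comm_ring_1) \<Rightarrow> 'a) \<Rightarrow> (nat \<Rightarrow> 'a) \<Rightarrow> nat \<Rightarrow> 'a" where
  "E_alpha m al v = (let w = adjQ m al (v (2*m+1)) in
     (\<lambda>k. if k \<in> {1..2*m-1} then v k - w k
          else if k = 2*m then v (2*m) + al (zpart m v) - half * al w
          else if k = 2*m+1 then v (2*m+1) else 0))"

definition E_beta :: "nat \<Rightarrow> ((nat \<Rightarrow> 'a::comm_ring_1) \<Rightarrow> 'a) \<Rightarrow> (nat \<Rightarrow> 'a) \<Rightarrow> nat \<Rightarrow> 'a" where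
  "E_beta m be v = (let w = adjQ m be (v (2*m)) in
     (\<lambda>k. if k \<in> {1..2*m-1} then v k - w k
          else if k = 2*m then v (2*m)
          else if k = 2*m+1 then v (2*m+1) + be (zpart m v) - half * be w else 0))"

definition unitv :: "nat \<Rightarrow> nat \<Rightarrow> 'a::comm_ring_1" where
  "unitv j = (\<lambda>k. if k = j then 1 else 0)"

definition mat_of :: "nat \<Rightarrow> ((nat \<Rightarrow> 'a::comm_ring_1) \<Rightarrow> (nat \<Rightarrow> 'a)) \<Rightarrow> nat \<Rightarrow> nat \<Rightarrow> 'a" where
  "mat_of N T = (\<lambda>i j. if i \<in> {1..N} \<and> j \<in> {1..N} then T (unitv j) i else 0)"

definition DSER_gens :: "nat \<Rightarrow> 'a::comm_ring_1 set \<Rightarrow> (nat \<Rightarrow> nat \<Rightarrow> 'a) set" where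
  "DSER_gens m J =
     {mat_of (2*m+1) (E_alpha m (linQ m a)) | a. \<forall>z. isQ m z \<longrightarrow> linQ m a z \<in> J}
   \<union> {mat_of (2*m+1) (E_beta m (linQ m b)) | b. \<forall>z. isQ m z \<longrightarrow> linQ m b z \<in> J}"

definition EO_QH :: "nat \<Rightarrow> (nat \<Rightarrow> nat \<Rightarrow> 'a::comm_ring_1) set" where
  "EO_QH m = gen_group (2*m+1) (DSER_gens m UNIV)"

definition EO_QH_ideal :: "nat \<Rightarrow> 'a::comm_ring_1 set \<Rightarrow> (nat \<Rightarrow> nat \<Rightarrow> 'a) set" where
  "EO_QH_ideal m I = gen_group (2*m+1) (DSER_gens m I)"

definition EO_QH_rel :: "nat \<Rightarrow> 'a::comm_ring_1 set \<Rightarrow> (nat \<Rightarrow> nat \<Rightarrow> 'a) set" where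
  "EO_QH_rel m I = normal_closure (2*m+1) (EO_QH m) (EO_QH_ideal m I)"

end

theory Submission
  imports Defs
begin

text \<open>In coordinates, a DSER transformation with linear form \<open>\<alpha>\<close> is additive in \<open>\<alpha>\<close>,
  so it factors into the transformations of the single coordinate forms. For the first coordinate
  (the summand \<open>(2)\<close>) this is a generator \<open>F(-\<lambda>/2)\<close> of \<open>EO\<^sub>2\<^sub>m\<^sub>+\<^sub>1\<close> acting on the hyperbolic
  plane; for any other coordinate it is an Eichler-Siegel transformation \<open>I + \<lambda>(e\<^sub>r\<^sub>p - e\<^sub>q\<^sub>s)\<close>,
  the commutator of \<open>F(\<lambda>/2)\<close> with \<open>F(1)\<close>. Conversely, a commutator identity writes each
  generator \<open>F(\<lambda>)\<close> not acting on the hyperbolic plane as a product of Eichler-Siegel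
  transformations and a conjugate of one of them by \<open>F(\<plusminus>1)\<close>.
  In both directions every factor carrying \<open>\<lambda>\<close> lies in the relative group or is conjugated by
  an element of the absolute one, which gives the equality of the absolute groups and the two
  inclusions of the relative groups.\<close>

definition clean_mat :: "nat \<Rightarrow> (nat \<Rightarrow> nat \<Rightarrow> 'a::comm_ring_1) \<Rightarrow> bool" where
  "clean_mat N A \<longleftrightarrow> (\<forall>i j. \<not> (i \<in> {1..N} \<and> j \<in> {1..N}) \<longrightarrow> A i j = 0)"

definition restrict_mat :: "nat \<Rightarrow> (nat \<Rightarrow> nat \<Rightarrow> 'a::comm_ring_1) \<Rightarrow> nat \<Rightarrow> nat \<Rightarrow> 'a" where
  "restrict_mat N A = (\<lambda>i j. if i \<in> {1..N} \<and> j \<in> {1..N} then A i j else 0)"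

lemma mmul_assoc: "mmul N (mmul N A B) C = mmul N A (mmul N B C)"
proof (intro ext)
  fix i j
  show "mmul N (mmul N A B) C i j = mmul N A (mmul N B C) i j"
  proof (cases "i \<in> {1..N} \<and> j \<in> {1..N}")
    case True
    have "mmul N (mmul N A B) C i j = (\<Sum>k = 1..N. \<Sum>l = 1..N. A i l * B l k * C k j)"
      using True by (simp add: mmul_def sum_distrib_right)
    also have "\<dots> = (\<Sum>l = 1..N. \<Sum>k = 1..N. A i l * B l k * C k j)"
      by (rule sum.swap)
    also have "\<dots> = mmul N A (mmul N B C) i j"
      using True by (simp add: mmul_def sum_distrib_left mult.assoc)
    finally show ?thesis .
  qed (auto simp: mmul_def)
qed

lemma mmul_restrict_mat: "mmul N A B = mmul N (restrict_mat N A) (restrict_mat N B)"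
  unfolding mmul_def restrict_mat_def by (intro ext) (auto intro!: sum.cong)

lemma clean_mat_mmul [simp]: "clean_mat N (mmul N A B)"
  unfolding clean_mat_def mmul_def by auto

lemma clean_mat_idm [simp]: "clean_mat N (idm N)"
  unfolding clean_mat_def idm_def by auto

lemma restrict_mat_clean: "clean_mat N A \<Longrightarrow> restrict_mat N A = A"
  unfolding clean_mat_def restrict_mat_def by (intro ext) auto

lemma mmul_idm_right: "mmul N A (idm N) = restrict_mat N A"
proof (intro ext)
  fix i j
  show "mmul N A (idm N) i j = restrict_mat N A i j"
  proof (cases "i \<in> {1..N} \<and> j \<in> {1..N}")
    case True
    have "mmul N A (idm N) i j = (\<Sum>k = 1..N. A i k * idm N k j)"
      using True by (simp add: mmul_def)
    also have "\<dots> = (\<Sum>k = 1..N. if k = j then A i k else 0)"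
      by (rule sum.cong) (auto simp: idm_def)
    finally show ?thesis using True by (simp add: restrict_mat_def)
  qed (auto simp: mmul_def restrict_mat_def)
qed

lemma mmul_idm_left: "mmul N (idm N) A = restrict_mat N A"
proof (intro ext)
  fix i j
  show "mmul N (idm N) A i j = restrict_mat N A i j"
  proof (cases "i \<in> {1..N} \<and> j \<in> {1..N}")
    case True
    have "mmul N (idm N) A i j = (\<Sum>k = 1..N. idm N i k * A k j)"
      using True by (simp add: mmul_def)
    also have "\<dots> = (\<Sum>k = 1..N. if k = i then A k j else 0)"
      by (rule sum.cong) (auto simp: idm_def)
    finally show ?thesis using True by (simp add: restrict_mat_def)
  qed (auto simp: mmul_def restrict_mat_def)
qed

lemma mmul_idm_right_clean [simp]: "clean_mat N A \<Longrightarrow> mmul N A (idm N) = A"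
  by (simp add: mmul_idm_right restrict_mat_clean)

lemma mmul_idm_left_clean [simp]: "clean_mat N A \<Longrightarrow> mmul N (idm N) A = A"
  by (simp add: mmul_idm_left restrict_mat_clean)

lemma mmul_mmul_idm_left [simp]: "mmul N X (mmul N (idm N) Y) = mmul N X Y"
  by (metis mmul_restrict_mat mmul_idm_left restrict_mat_clean clean_mat_mmul)

text \<open>\<^const>\<open>mmul\<close> only reads entries indexed in \<open>{1..N}\<close>, so \<^const>\<open>idm\<close> is a unit
  only for matrices vanishing outside that range; subgroups are therefore sets of such matrices.\<close>

definition mat_subgroup :: "nat \<Rightarrow> (nat \<Rightarrow> nat \<Rightarrow> 'a::comm_ring_1) set \<Rightarrow> bool" where
  "mat_subgroup N G \<longleftrightarrow> (\<forall>A\<in>G. clean_mat N A) \<and> idm N \<in> G \<and> (\<forall>A\<in>G. \<forall>B\<in>G. mmul N A B \<in> G)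
     \<and> (\<forall>A\<in>G. \<exists>B\<in>G. mmul N A B = idm N \<and> mmul N B A = idm N)"

lemma mat_subgroup_mmul: "mat_subgroup N G \<Longrightarrow> A \<in> G \<Longrightarrow> B \<in> G \<Longrightarrow> mmul N A B \<in> G"
  unfolding mat_subgroup_def by blast

lemma mat_subgroup_clean: "mat_subgroup N G \<Longrightarrow> A \<in> G \<Longrightarrow> clean_mat N A"
  unfolding mat_subgroup_def by blast

lemma gen_group_clean: "A \<in> gen_group N S \<Longrightarrow> clean_mat N A"
  by (induction rule: gen_group.induct) auto

lemma gen_group_mmul: "B \<in> gen_group N S \<Longrightarrow> A \<in> gen_group N S \<Longrightarrow> mmul N A B \<in> gen_group N S"
proof (induction rule: gen_group.induct)
  case gen_id
  then show ?case by (simp add: gen_group_clean)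
next
  case (gen_mul B g)
  then show ?case by (metis gen_group.gen_mul mmul_assoc)
next
  case (gen_mul_inv B g h)
  then show ?case by (metis gen_group.gen_mul_inv mmul_assoc)
qed

lemma gen_group_generator: "g \<in> S \<Longrightarrow> clean_mat N g \<Longrightarrow> g \<in> gen_group N S"
  using gen_group.gen_mul[OF gen_group.gen_id, of g S N] by simp

lemma gen_group_generators: "(\<And>g. g \<in> S \<Longrightarrow> clean_mat N g) \<Longrightarrow> S \<subseteq> gen_group N S"
  using gen_group_generator by blast

lemma mmul_mmul_inverse:
  assumes "mmul N A B = idm N" "mmul N g g' = idm N"
  shows "mmul N (mmul N A g) (mmul N g' B) = idm N"
proof -
  have "mmul N (mmul N A g) (mmul N g' B) = mmul N A (mmul N (mmul N g g') B)"
    by (simp add: mmul_assoc)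
  then show ?thesis using assms by simp
qed

lemma mat_subgroup_gen_group:
  assumes "\<And>g. g \<in> S \<Longrightarrow> clean_mat N g \<and> (\<exists>g'\<in>S. mmul N g g' = idm N \<and> mmul N g' g = idm N)"
  shows "mat_subgroup N (gen_group N S)"
proof -
  have "\<exists>B\<in>gen_group N S. mmul N A B = idm N \<and> mmul N B A = idm N" if "A \<in> gen_group N S" for A
    using that
  proof (induction rule: gen_group.induct)
    case gen_id
    show ?case by (intro bexI[of _ "idm N"]) (auto intro: gen_group.gen_id)
  next
    case (gen_mul A g)
    obtain B where B: "B \<in> gen_group N S" "mmul N A B = idm N" "mmul N B A = idm N"
      using gen_mul.IH by blast
    obtain g' where g': "g' \<in> S" "mmul N g g' = idm N" "mmul N g' g = idm N"
      using assms[OF gen_mul.hyps(2)] by blast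
    have "mmul N g' B \<in> gen_group N S"
      using assms g'(1) by (intro gen_group_mmul[OF B(1)] gen_group_generator) auto
    then show ?case
      using mmul_mmul_inverse[OF B(2) g'(2)] mmul_mmul_inverse[OF g'(3) B(3)] by blast
  next
    case (gen_mul_inv A g h)
    obtain B where B: "B \<in> gen_group N S" "mmul N A B = idm N" "mmul N B A = idm N"
      using gen_mul_inv.IH by blast
    have "mmul N g B \<in> gen_group N S"
      using assms gen_mul_inv.hyps(2) by (intro gen_group_mmul[OF B(1)] gen_group_generator) auto
    then show ?case
      using mmul_mmul_inverse[OF B(2) gen_mul_inv.hyps(4)] mmul_mmul_inverse[OF gen_mul_inv.hyps(3) B(3)]
      by blast
  qed
  then show ?thesis unfolding mat_subgroup_def
    using gen_group_clean gen_group_mmul by (auto intro: gen_group.gen_id)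
qed

lemma gen_group_least:
  assumes T: "mat_subgroup N T" and S: "S \<subseteq> T"
  shows "gen_group N S \<subseteq> T"
proof
  fix A assume "A \<in> gen_group N S"
  then show "A \<in> T"
  proof (induction rule: gen_group.induct)
    case gen_id
    then show ?case using T by (simp add: mat_subgroup_def)
  next
    case (gen_mul A g)
    then show ?case using T S by (auto simp: mat_subgroup_def)
  next
    case (gen_mul_inv A g h)
    have "g \<in> T" using S gen_mul_inv.hyps(2) by blast
    then obtain B where B: "B \<in> T" "mmul N g B = idm N" "mmul N B g = idm N"
      using T unfolding mat_subgroup_def by blast
    have "B = mmul N (idm N) h"
      by (metis B(3) T B(1) gen_mul_inv.hyps(3) mat_subgroup_clean mmul_assoc mmul_idm_right_clean)
    then have "mmul N A h = mmul N A B" by simp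
    then show ?case using gen_mul_inv.IH B(1) T by (simp add: mat_subgroup_mmul)
  qed
qed

definition conjugates :: "nat \<Rightarrow> (nat \<Rightarrow> nat \<Rightarrow> 'a::comm_ring_1) set \<Rightarrow> (nat \<Rightarrow> nat \<Rightarrow> 'a) set \<Rightarrow> (nat \<Rightarrow> nat \<Rightarrow> 'a) set" where
  "conjugates N G H = {mmul N (mmul N g h) g' | g h g'. g \<in> G \<and> h \<in> H \<and> mmul N g g' = idm N \<and> mmul N g' g = idm N}"

lemma normal_closure_conjugates: "normal_closure N G H = gen_group N (conjugates N G H)"
  unfolding normal_closure_def conjugates_def ..

lemma mmul_conjugate:
  assumes "mmul N g' g = idm N"
  shows "mmul N (mmul N g (mmul N A B)) g' = mmul N (mmul N (mmul N g A) g') (mmul N (mmul N g B) g')"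
proof -
  have "mmul N g' (mmul N g X) = mmul N (idm N) X" for X
    using assms by (simp flip: mmul_assoc)
  then show ?thesis by (simp add: mmul_assoc)
qed

lemma conjugate_inverse:
  assumes "mmul N g g' = idm N" "mmul N g' g = idm N" "clean_mat N g" "mmul N A B = idm N"
  shows "mmul N (mmul N (mmul N g A) g') (mmul N (mmul N g B) g') = idm N"
  using mmul_conjugate[OF assms(2), of A B] assms(1,3,4) by (simp add: mmul_assoc)

lemma mat_subgroup_normal_closure:
  assumes G: "mat_subgroup N G" and H: "mat_subgroup N H"
  shows "mat_subgroup N (normal_closure N G H)"
  unfolding normal_closure_conjugates
proof (rule mat_subgroup_gen_group)
  fix c assume "c \<in> conjugates N G H"
  then obtain g h g' where c: "c = mmul N (mmul N g h) g'" "g \<in> G" "h \<in> H"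
      and g': "mmul N g g' = idm N" "mmul N g' g = idm N"
    unfolding conjugates_def by blast
  obtain h' where h': "h' \<in> H" "mmul N h h' = idm N" "mmul N h' h = idm N"
    using H c(3) unfolding mat_subgroup_def by blast
  have clean: "clean_mat N g" using G c(2) by (rule mat_subgroup_clean)
  have "mmul N (mmul N g h') g' \<in> conjugates N G H"
    unfolding conjugates_def using c g' h' by blast
  moreover have "mmul N c (mmul N (mmul N g h') g') = idm N"
    unfolding c(1) by (rule conjugate_inverse[OF g' clean h'(2)])
  moreover have "mmul N (mmul N (mmul N g h') g') c = idm N"
    unfolding c(1) by (rule conjugate_inverse[OF g' clean h'(3)])
  ultimately show "clean_mat N c \<and> (\<exists>c'\<in>conjugates N G H. mmul N c c' = idm N \<and> mmul N c' c = idm N)"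
    using c(1) by auto
qed

lemma conjugates_conjugate:
  assumes G: "mat_subgroup N G" and c: "c \<in> conjugates N G H"
    and g: "g \<in> G" "mmul N g g' = idm N" "mmul N g' g = idm N"
  shows "mmul N (mmul N g c) g' \<in> conjugates N G H"
proof -
  obtain k h k' where k: "c = mmul N (mmul N k h) k'" "k \<in> G" "h \<in> H"
      and k': "mmul N k k' = idm N" "mmul N k' k = idm N"
    using c unfolding conjugates_def by blast
  have "mmul N (mmul N g c) g' = mmul N (mmul N (mmul N g k) h) (mmul N k' g')"
    unfolding k(1) by (simp add: mmul_assoc)
  moreover have "mmul N g k \<in> G" using G g k by (simp add: mat_subgroup_mmul)
  moreover have "mmul N (mmul N g k) (mmul N k' g') = idm N" "mmul N (mmul N k' g') (mmul N g k) = idm N"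
    using mmul_mmul_inverse[OF g(2) k'(1)] mmul_mmul_inverse[OF k'(2) g(3)] .
  ultimately show ?thesis unfolding conjugates_def using k by blast
qed

lemma normal_closure_conjugate:
  assumes G: "mat_subgroup N G" and A: "A \<in> normal_closure N G H"
    and g: "g \<in> G" "mmul N g g' = idm N" "mmul N g' g = idm N"
  shows "mmul N (mmul N g A) g' \<in> normal_closure N G H"
  using A unfolding normal_closure_conjugates
proof (induction rule: gen_group.induct)
  case gen_id
  have "clean_mat N g" using G g by (simp add: mat_subgroup_clean)
  then show ?case using g by (simp add: gen_group.gen_id)
next
  case (gen_mul A c)
  show ?case
    unfolding mmul_conjugate[OF g(3)]
    by (rule gen_group.gen_mul[OF gen_mul.IH conjugates_conjugate[OF G gen_mul.hyps(2) g]])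
next
  case (gen_mul_inv A c h)
  have clean: "clean_mat N g" using G g(1) by (rule mat_subgroup_clean)
  show ?case
    unfolding mmul_conjugate[OF g(3)]
    by (rule gen_group.gen_mul_inv[OF gen_mul_inv.IH conjugates_conjugate[OF G gen_mul_inv.hyps(2) g]
          conjugate_inverse[OF g(2,3) clean gen_mul_inv.hyps(3)]
          conjugate_inverse[OF g(2,3) clean gen_mul_inv.hyps(4)]])
qed

lemma normal_closure_superset:
  assumes G: "mat_subgroup N G" and h: "h \<in> H" "clean_mat N h"
  shows "h \<in> normal_closure N G H"
proof -
  have "idm N \<in> G" "mmul N (idm N) (idm N) = idm N" using G by (simp_all add: mat_subgroup_def)
  then have "mmul N (mmul N (idm N) h) (idm N) \<in> conjugates N G H"
    unfolding conjugates_def using h(1) by blast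
  then show ?thesis
    unfolding normal_closure_conjugates using h(2) by (simp add: gen_group_generator)
qed

lemma normal_closure_gen_group_subset:
  assumes G: "mat_subgroup N G" and H: "mat_subgroup N H" and S: "S \<subseteq> normal_closure N G H"
  shows "normal_closure N G (gen_group N S) \<subseteq> normal_closure N G H"
proof -
  have NC: "mat_subgroup N (normal_closure N G H)"
    using G H by (rule mat_subgroup_normal_closure)
  have "gen_group N S \<subseteq> normal_closure N G H"
    using NC S by (rule gen_group_least)
  then have "conjugates N G (gen_group N S) \<subseteq> normal_closure N G H"
    unfolding conjugates_def using normal_closure_conjugate[OF G] by blast
  then show ?thesis
    unfolding normal_closure_conjugates[of N G "gen_group N S"] by (rule gen_group_least[OF NC])
qed

lemma subset_normal_closure:
  "mat_subgroup N G \<Longrightarrow> mat_subgroup N H \<Longrightarrow> H \<subseteq> normal_closure N G H"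
  using normal_closure_superset mat_subgroup_clean by blast

definition clean_vec :: "nat \<Rightarrow> (nat \<Rightarrow> 'a::comm_ring_1) \<Rightarrow> bool" where
  "clean_vec N v \<longleftrightarrow> (\<forall>k. k \<notin> {1..N} \<longrightarrow> v k = 0)"

definition lin_endo :: "nat \<Rightarrow> ((nat \<Rightarrow> 'a::comm_ring_1) \<Rightarrow> (nat \<Rightarrow> 'a)) \<Rightarrow> bool" where
  "lin_endo N T \<longleftrightarrow> (\<forall>v. clean_vec N v \<longrightarrow> clean_vec N (T v))
     \<and> (\<forall>v w. T (\<lambda>k. v k + w k) = (\<lambda>k. T v k + T w k))
     \<and> (\<forall>c v. T (\<lambda>k. c * v k) = (\<lambda>k. c * T v k))"

lemma clean_vec_unitv: "j \<in> {1..N} \<Longrightarrow> clean_vec N (unitv j)"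
  unfolding clean_vec_def unitv_def by auto

lemma lin_endo_add: "lin_endo N T \<Longrightarrow> T (\<lambda>k. v k + w k) = (\<lambda>k. T v k + T w k)"
  unfolding lin_endo_def by blast

lemma lin_endo_smult: "lin_endo N T \<Longrightarrow> T (\<lambda>k. c * v k) = (\<lambda>k. c * T v k)"
  unfolding lin_endo_def by blast

lemma lin_endo_comp: "lin_endo N T \<Longrightarrow> lin_endo N S \<Longrightarrow> lin_endo N (T \<circ> S)"
  unfolding lin_endo_def by simp

lemma lin_endo_expand:
  assumes T: "lin_endo N T" and v: "clean_vec N v"
  shows "T v i = (\<Sum>j = 1..N. v j * T (unitv j) i)"
proof -
  have expand: "T (\<lambda>k. if k \<in> K then v k else 0) = (\<lambda>i. \<Sum>j\<in>K. v j * T (unitv j) i)"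
    if "finite K" for K
    using that
  proof (induction K rule: finite_induct)
    case empty
    show ?case using lin_endo_smult[OF T, of 0 v] by simp
  next
    case (insert j K)
    have "(\<lambda>k. if k \<in> insert j K then v k else 0)
        = (\<lambda>k. (if k \<in> K then v k else 0) + v j * unitv j k)"
      using insert.hyps(2) by (auto simp: unitv_def)
    moreover have "T (\<lambda>k. (if k \<in> K then v k else 0) + v j * unitv j k)
        = (\<lambda>i. T (\<lambda>k. if k \<in> K then v k else 0) i + v j * T (unitv j) i)"
      by (simp add: lin_endo_add[OF T] lin_endo_smult[OF T])
    ultimately show ?case
      using insert.IH insert.hyps by (simp add: add.commute)
  qed
  have "(\<lambda>k. if k \<in> {1..N} then v k else 0) = v"
    using v unfolding clean_vec_def by auto
  then show ?thesis using expand[of "{1..N}"] by simp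
qed

lemma mat_of_comp:
  assumes T: "lin_endo N T" and S: "lin_endo N S"
  shows "mat_of N (T \<circ> S) = mmul N (mat_of N T) (mat_of N S)"
proof (intro ext)
  fix i j
  show "mat_of N (T \<circ> S) i j = mmul N (mat_of N T) (mat_of N S) i j"
  proof (cases "i \<in> {1..N} \<and> j \<in> {1..N}")
    case True
    have "clean_vec N (S (unitv j))"
      using S True clean_vec_unitv unfolding lin_endo_def by blast
    then have "T (S (unitv j)) i = (\<Sum>k = 1..N. S (unitv j) k * T (unitv k) i)"
      by (rule lin_endo_expand[OF T])
    also have "\<dots> = (\<Sum>k = 1..N. mat_of N T i k * mat_of N S k j)"
      using True by (intro sum.cong) (auto simp: mat_of_def)
    finally show ?thesis using True by (simp add: mat_of_def mmul_def)
  qed (auto simp: mat_of_def mmul_def)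
qed

lemma mat_of_id: "mat_of N id = idm N"
  unfolding mat_of_def idm_def unitv_def by (intro ext) auto

lemma mat_of_cong: "(\<And>v. clean_vec N v \<Longrightarrow> T v = S v) \<Longrightarrow> mat_of N T = mat_of N S"
  unfolding mat_of_def by (intro ext) (auto simp: clean_vec_unitv)

lemma clean_mat_mat_of [simp]: "clean_mat N (mat_of N T)"
  unfolding clean_mat_def mat_of_def by auto

lemma mmul_mat_of_inverse:
  assumes "lin_endo N T" "lin_endo N S" "\<And>v. clean_vec N v \<Longrightarrow> T (S v) = v"
  shows "mmul N (mat_of N T) (mat_of N S) = idm N"
proof -
  have "mat_of N (T \<circ> S) = mat_of N id" using assms(3) by (intro mat_of_cong) simp
  then show ?thesis using mat_of_comp[OF assms(1,2)] mat_of_id by metis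
qed

lemma two_mult_half:
  assumes "(2::'a::comm_ring_1) dvd 1" shows "2 * (half::'a) = 1"
proof -
  obtain u :: 'a where u: "1 = 2 * u" using assms by auto
  have "half = u" unfolding half_def
  proof (rule the_equality)
    show "2 * u = 1" using u by simp
    fix x :: 'a assume "2 * x = 1"
    then have "x = x * (2 * u)" using u by simp
    also have "\<dots> = (2 * x) * u" by (simp add: algebra_simps)
    finally show "x = u" using \<open>2 * x = 1\<close> by simp
  qed
  then show ?thesis using u by simp
qed

lemma half_mult_two:
  assumes "(2::'a::comm_ring_1) dvd 1" shows "half * (2 * x) = (x::'a)"
  using two_mult_half[OF assms] by (metis mult.assoc mult.commute mult_1)

lemma is_ideal_UNIV: "is_ideal UNIV"
  unfolding is_ideal_def by simp

lemma ideal_mult: "is_ideal I \<Longrightarrow> c \<in> I \<Longrightarrow> r * c \<in> I"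
  unfolding is_ideal_def by blast

lemma ideal_uminus: "is_ideal I \<Longrightarrow> c \<in> I \<Longrightarrow> - c \<in> I"
  using ideal_mult[of I c "-1"] by simp

text \<open>\<^term>\<open>short_root p q l\<close> has matrix \<open>I + l(e\<^sub>1\<^sub>q - 2e\<^sub>p\<^sub>1 - l e\<^sub>p\<^sub>q)\<close>, so
  \<open>F\<^sup>1\<^sub>i(l)\<close> and \<open>F\<^sup>2\<^sub>i(l)\<close> are the cases \<open>(p, q) = (2i, 2i+1)\<close> and \<open>(2i+1, 2i)\<close>;
  \<^term>\<open>long_root p q r s a\<close> has matrix \<open>I + a(e\<^sub>r\<^sub>p - e\<^sub>q\<^sub>s)\<close>.\<close>

definition short_root :: "nat \<Rightarrow> nat \<Rightarrow> 'a::comm_ring_1 \<Rightarrow> (nat \<Rightarrow> 'a) \<Rightarrow> nat \<Rightarrow> 'a" where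
  "short_root p q l v = (\<lambda>k. if k = 1 then v 1 + l * v q
     else if k = p then v p - 2 * l * v 1 - l * l * v q else v k)"

definition long_root :: "nat \<Rightarrow> nat \<Rightarrow> nat \<Rightarrow> nat \<Rightarrow> 'a::comm_ring_1 \<Rightarrow> (nat \<Rightarrow> 'a) \<Rightarrow> nat \<Rightarrow> 'a" where
  "long_root p q r s a v = (\<lambda>k. if k = q then v q - a * v s else if k = r then v r + a * v p else v k)"

lemma lin_endo_short_root: "p \<in> {1..N} \<Longrightarrow> q \<in> {1..N} \<Longrightarrow> lin_endo N (short_root p q l)"
  unfolding lin_endo_def clean_vec_def short_root_def by (auto simp: algebra_simps fun_eq_iff)

lemma lin_endo_long_root:
  "p \<in> {1..N} \<Longrightarrow> q \<in> {1..N} \<Longrightarrow> r \<in> {1..N} \<Longrightarrow> s \<in> {1..N} \<Longrightarrow> lin_endo N (long_root p q r s a)"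
  unfolding lin_endo_def clean_vec_def long_root_def by (auto simp: algebra_simps fun_eq_iff)

lemma short_root_inverse: "p \<noteq> 1 \<Longrightarrow> q \<noteq> 1 \<Longrightarrow> p \<noteq> q \<Longrightarrow> short_root p q l (short_root p q (-l) v) = v"
  unfolding short_root_def by (auto simp: algebra_simps fun_eq_iff)

lemma long_root_inverse: "distinct [p, q, r, s] \<Longrightarrow> long_root p q r s a (long_root p q r s (-a) v) = v"
  unfolding long_root_def by (auto simp: algebra_simps fun_eq_iff)

lemma short_root_commutator:
  assumes "distinct [1, p, q, r, s]"
  shows "short_root q p l \<circ> short_root r s u \<circ> short_root q p (-l) \<circ> short_root r s (-u)
    = long_root p q r s (2 * l * u)"
  using assms unfolding short_root_def long_root_def by (auto simp: algebra_simps fun_eq_iff)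

lemma long_short_commutator:
  assumes "distinct [1, p, q, r, s]"
  shows "long_root p q r s a \<circ> short_root s r u \<circ> long_root p q r s (-a) \<circ> short_root s r (-u)
    = short_root q p (-(a * u)) \<circ> long_root p q s r (a * u * u)"
  using assms unfolding short_root_def long_root_def by (auto simp: algebra_simps fun_eq_iff)

lemma short_root_entry:
  assumes "a \<in> {1..N}" "b \<in> {1..N}" "p \<in> {1..N}" "q \<in> {1..N}" "p \<noteq> 1" "q \<noteq> 1" "p \<noteq> q"
  shows "idm N a b + c * (emat N 1 q a b - 2 * emat N p 1 a b - c * emat N p q a b)
    = short_root p q c (unitv b) a"
proof -
  have e: "emat N k l a b = (if a = k \<and> b = l then 1 else 0)" if "k \<in> {1..N}" "l \<in> {1..N}" for k l
    using assms(1,2) that by (simp add: emat_def)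
  have d: "idm N a b = (if a = b then 1 else 0)" using assms(1) by (simp add: idm_def)
  have "(1::nat) \<in> {1..N}" using assms(1) by auto
  then show ?thesis
    unfolding e[OF \<open>1 \<in> {1..N}\<close> assms(4)] e[OF assms(3) \<open>1 \<in> {1..N}\<close>] e[OF assms(3,4)] d
      short_root_def unitv_def
    using assms(5-7) by (auto simp: algebra_simps)
qed

lemma F1_eq_short_root:
  assumes i: "i \<in> {1..s}"
  shows "F1 s i c = mat_of (2*s+1) (short_root (2*i) (2*i+1) c)"
proof (intro ext)
  fix a b
  show "F1 s i c a b = mat_of (2*s+1) (short_root (2*i) (2*i+1) c) a b"
  proof (cases "a \<in> {1..2*s+1} \<and> b \<in> {1..2*s+1}")
    case True
    have "F1 s i c a b = short_root (2*i) (2*i+1) c (unitv b) a"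
      unfolding F1_def Let_def using True i by (intro short_root_entry) auto
    then show ?thesis using True by (simp add: mat_of_def)
  next
    case False
    then have zero: "emat (2*s+1) k l a b = 0" "idm (2*s+1) a b = 0" for k l
      by (auto simp: emat_def idm_def)
    show ?thesis using False unfolding F1_def Let_def mat_of_def zero by auto
  qed
qed

lemma F2_eq_short_root:
  assumes i: "i \<in> {1..s}"
  shows "F2 s i c = mat_of (2*s+1) (short_root (2*i+1) (2*i) c)"
proof (intro ext)
  fix a b
  show "F2 s i c a b = mat_of (2*s+1) (short_root (2*i+1) (2*i) c) a b"
  proof (cases "a \<in> {1..2*s+1} \<and> b \<in> {1..2*s+1}")
    case True
    have "F2 s i c a b = short_root (2*i+1) (2*i) c (unitv b) a"
      unfolding F2_def Let_def using True i by (intro short_root_entry) auto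
    then show ?thesis using True by (simp add: mat_of_def)
  next
    case False
    then have zero: "emat (2*s+1) k l a b = 0" "idm (2*s+1) a b = 0" for k l
      by (auto simp: emat_def idm_def)
    show ?thesis using False unfolding F2_def Let_def mat_of_def zero by auto
  qed
qed

text \<open>Under \<open>(2) \<perp> \<psi>\<^sub>m\<close>, with the coordinates of \<open>Q \<perp> \<bbbH>(R)\<close> numbered \<open>1..2m+1\<close>,
  every coordinate \<open>k \<ge> 2\<close> is paired with \<^term>\<open>dual_idx k\<close>; the first one is paired with itself.\<close>

definition dual_idx :: "nat \<Rightarrow> nat" where
  "dual_idx k = (if k = 1 then 1 else if even k then k + 1 else k - 1)"

lemma dual_idx_one [simp]: "dual_idx 1 = 1" "dual_idx (Suc 0) = Suc 0"
  by (simp_all add: dual_idx_def)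

lemma dual_idx_mem: "odd M \<Longrightarrow> k \<in> {2..M} \<Longrightarrow> dual_idx k \<in> {2..M}"
  unfolding dual_idx_def by (auto elim!: evenE oddE)

lemma dual_idx_dual_idx: "k \<noteq> 0 \<Longrightarrow> dual_idx (dual_idx k) = k"
  unfolding dual_idx_def by (auto elim!: evenE oddE)

lemma dual_idx_neq: "2 \<le> k \<Longrightarrow> dual_idx k \<noteq> k \<and> dual_idx k \<noteq> 1"
  unfolding dual_idx_def by (auto elim!: evenE oddE)

lemma sum_dual_idx: "odd M \<Longrightarrow> (\<Sum>k = 2..M. f (dual_idx k)) = (\<Sum>k = 2..M. f k)"
  by (rule sum.reindex_bij_witness[where i = dual_idx and j = dual_idx])
    (use dual_idx_mem[of M] in \<open>auto simp: dual_idx_dual_idx\<close>)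

lemma EO_gens_eq:
  "EO_gens s J = {mat_of (2*s+1) (short_root (dual_idx p) p c) | p c. p \<in> {2..2*s+1} \<and> c \<in> J}"
proof -
  have "{F1 s i c | i c. i \<in> {1..s} \<and> c \<in> J}
      = {mat_of (2*s+1) (short_root (dual_idx p) p c) | p c. p \<in> {2..2*s+1} \<and> odd p \<and> c \<in> J}"
  proof (intro set_eqI iffI)
    fix g assume "g \<in> {F1 s i c | i c. i \<in> {1..s} \<and> c \<in> J}"
    then obtain i c where "i \<in> {1..s}" "c \<in> J" "g = F1 s i c" by blast
    moreover from this(1) have "dual_idx (2*i+1) = 2*i" by (simp add: dual_idx_def)
    ultimately show "g \<in> {mat_of (2*s+1) (short_root (dual_idx p) p c) | p c. p \<in> {2..2*s+1} \<and> odd p \<and> c \<in> J}"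
      by (auto simp: F1_eq_short_root intro!: exI[of _ "2*i+1"])
  next
    fix g assume "g \<in> {mat_of (2*s+1) (short_root (dual_idx p) p c) | p c. p \<in> {2..2*s+1} \<and> odd p \<and> c \<in> J}"
    then obtain p c where "p \<in> {2..2*s+1}" "odd p" "c \<in> J" "g = mat_of (2*s+1) (short_root (dual_idx p) p c)"
      by blast
    moreover obtain i where "p = 2*i+1" using \<open>odd p\<close> by (auto elim: oddE)
    ultimately have "i \<in> {1..s}" "g = F1 s i c"
      by (auto simp: F1_eq_short_root dual_idx_def)
    then show "g \<in> {F1 s i c | i c. i \<in> {1..s} \<and> c \<in> J}"
      using \<open>c \<in> J\<close> by blast
  qed
  moreover have "{F2 s i c | i c. i \<in> {1..s} \<and> c \<in> J}
      = {mat_of (2*s+1) (short_root (dual_idx p) p c) | p c. p \<in> {2..2*s+1} \<and> even p \<and> c \<in> J}"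
  proof (intro set_eqI iffI)
    fix g assume "g \<in> {F2 s i c | i c. i \<in> {1..s} \<and> c \<in> J}"
    then obtain i c where "i \<in> {1..s}" "c \<in> J" "g = F2 s i c" by blast
    moreover have "dual_idx (2*i) = 2*i+1" by (simp add: dual_idx_def)
    ultimately show "g \<in> {mat_of (2*s+1) (short_root (dual_idx p) p c) | p c. p \<in> {2..2*s+1} \<and> even p \<and> c \<in> J}"
      by (auto simp: F2_eq_short_root intro!: exI[of _ "2*i"])
  next
    fix g assume "g \<in> {mat_of (2*s+1) (short_root (dual_idx p) p c) | p c. p \<in> {2..2*s+1} \<and> even p \<and> c \<in> J}"
    then obtain p c where "p \<in> {2..2*s+1}" "even p" "c \<in> J" "g = mat_of (2*s+1) (short_root (dual_idx p) p c)"
      by blast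
    moreover obtain i where "p = 2*i" using \<open>even p\<close> by (auto elim: evenE)
    ultimately have "i \<in> {1..s}" "g = F2 s i c"
      by (auto simp: F2_eq_short_root dual_idx_def)
    then show "g \<in> {F2 s i c | i c. i \<in> {1..s} \<and> c \<in> J}"
      using \<open>c \<in> J\<close> by blast
  qed
  ultimately show ?thesis unfolding EO_gens_def by blast
qed

lemma odd_two_m_minus_one: "1 \<le> m \<Longrightarrow> odd (2*m - 1 :: nat)"
  by presburger

lemma psi_tilde_eq:
  assumes i: "i \<in> {2..2*m-1}" and j: "j \<in> {2..2*m-1}"
  shows "psi_tilde (m-1) (i-1) (j-1) = (if j = dual_idx i then 1 else 0)"
proof -
  have "(\<exists>k\<in>{1..m-1}. (i-1 = 2*k-1 \<and> j-1 = 2*k) \<or> (i-1 = 2*k \<and> j-1 = 2*k-1)) \<longleftrightarrow> j = dual_idx i"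
  proof
    assume "\<exists>k\<in>{1..m-1}. (i-1 = 2*k-1 \<and> j-1 = 2*k) \<or> (i-1 = 2*k \<and> j-1 = 2*k-1)"
    then obtain k where "k \<in> {1..m-1}" "(i-1 = 2*k-1 \<and> j-1 = 2*k) \<or> (i-1 = 2*k \<and> j-1 = 2*k-1)"
      by blast
    then consider "i = 2*k" "j = 2*k+1" | "i = 2*k+1" "j = 2*k" "k \<ge> 1" using i j by auto
    then show "j = dual_idx i" by cases (auto simp: dual_idx_def)
  next
    assume "j = dual_idx i"
    moreover obtain k where "i = 2*k \<or> i = 2*k+1" by (metis oddE evenE)
    ultimately show "\<exists>k\<in>{1..m-1}. (i-1 = 2*k-1 \<and> j-1 = 2*k) \<or> (i-1 = 2*k \<and> j-1 = 2*k-1)"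
      using i j by (intro bexI[of _ k]) (auto simp: dual_idx_def)
  qed
  then show ?thesis unfolding psi_tilde_def by simp
qed

lemma gramQ_eq:
  assumes i: "i \<in> {1..2*m-1}" and j: "j \<in> {1..2*m-1}"
  shows "gramQ m i j = (if i = 1 then (if j = 1 then 2 else 0) else if j = dual_idx i then 1 else 0)"
proof (cases "i = 1")
  case False
  then have "2 \<le> i" using i by auto
  then show ?thesis
    using False j dual_idx_neq[of i] psi_tilde_eq[of i m j] i by (auto simp: gramQ_def)
qed (simp add: gramQ_def)

lemma bilQ_eq:
  assumes m: "1 \<le> m"
  shows "bilQ m w z = 2 * w 1 * z 1 + (\<Sum>i = 2..2*m-1. w i * z (dual_idx i))"
proof -
  have row: "(\<Sum>j = 1..2*m-1. gramQ m i j * z j) = (if i = 1 then 2 * z 1 else z (dual_idx i))"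
    if i: "i \<in> {1..2*m-1}" for i
  proof -
    let ?t = "if i = 1 then 1 else dual_idx i"
    have t: "?t \<in> {1..2*m-1}"
      using i dual_idx_mem[OF odd_two_m_minus_one[OF m], of i] by auto
    have "(\<Sum>j = 1..2*m-1. gramQ m i j * z j)
        = (\<Sum>j = 1..2*m-1. if j = ?t then (if i = 1 then 2 else 1) * z j else 0)"
      by (rule sum.cong) (auto simp: gramQ_eq[OF i])
    also have "\<dots> = (if i = 1 then 2 else 1) * z ?t" using t by simp
    finally show ?thesis by auto
  qed
  have "bilQ m w z = (\<Sum>i = 1..2*m-1. w i * (\<Sum>j = 1..2*m-1. gramQ m i j * z j))"
    unfolding bilQ_def by (simp add: sum_distrib_left mult.assoc)
  also have "\<dots> = (\<Sum>i = 1..2*m-1. w i * (if i = 1 then 2 * z 1 else z (dual_idx i)))"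
  proof (rule sum.cong)
    fix i assume "i \<in> {1..2*m-1}"
    then show "w i * (\<Sum>j = 1..2*m-1. gramQ m i j * z j) = w i * (if i = 1 then 2 * z 1 else z (dual_idx i))"
      by (simp only: row)
  qed simp
  also have "\<dots> = 2 * w 1 * z 1 + (\<Sum>i = 2..2*m-1. w i * z (dual_idx i))"
    using m by (simp add: sum.atLeast_Suc_atMost numeral_2_eq_2)
  finally show ?thesis .
qed

lemma linQ_eq: "1 \<le> m \<Longrightarrow> linQ m a z = a 1 * z 1 + (\<Sum>i = 2..2*m-1. a i * z i)"
  unfolding linQ_def by (simp add: sum.atLeast_Suc_atMost numeral_2_eq_2)

lemma bilQ_sym:
  assumes m: "1 \<le> m"
  shows "bilQ m w z = bilQ m z w"
proof -
  have "(\<Sum>i = 2..2*m-1. w i * z (dual_idx i)) = (\<Sum>i = 2..2*m-1. w (dual_idx i) * z (dual_idx (dual_idx i)))"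
    using sum_dual_idx[OF odd_two_m_minus_one[OF m], of "\<lambda>i. w i * z (dual_idx i)"] by simp
  also have "\<dots> = (\<Sum>i = 2..2*m-1. z i * w (dual_idx i))"
    by (rule sum.cong) (auto simp: dual_idx_dual_idx)
  finally show ?thesis unfolding bilQ_eq[OF m] by simp
qed

lemma isQ_unitv: "k \<in> {1..2*m-1} \<Longrightarrow> isQ m (unitv k)"
  unfolding isQ_def unitv_def by auto

lemma bilQ_unitv:
  assumes m: "1 \<le> m" and j: "j \<in> {1..2*m-1}"
  shows "bilQ m w (unitv j) = (if j = 1 then 2 * w 1 else w (dual_idx j))"
proof -
  have "(\<Sum>i = 2..2*m-1. w i * unitv j (dual_idx i)) = (\<Sum>i = 2..2*m-1. if i = dual_idx j then w i else 0)"
    using j by (intro sum.cong) (auto simp: unitv_def dual_idx_dual_idx)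
  also have "\<dots> = (if j = 1 then 0 else w (dual_idx j))"
    using j dual_idx_mem[OF odd_two_m_minus_one[OF m], of j] dual_idx_neq[of j] by auto
  finally show ?thesis unfolding bilQ_eq[OF m] by (simp add: unitv_def)
qed

lemma bilQ_nondegenerate:
  assumes two: "(2::'a::comm_ring_1) dvd 1" and m: "1 \<le> m" and Q: "isQ m w" "isQ m w'"
    and eq: "\<And>z. isQ m z \<Longrightarrow> bilQ m w z = bilQ m w' (z::nat \<Rightarrow> 'a)"
  shows "w = w'"
proof
  fix k
  show "w k = w' k"
  proof (cases "k \<in> {2..2*m-1}")
    case True
    then have j: "dual_idx k \<in> {1..2*m-1}" "dual_idx k \<noteq> 1"
      using dual_idx_mem[OF odd_two_m_minus_one[OF m], of k] dual_idx_neq[of k] by auto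
    have "bilQ m w (unitv (dual_idx k)) = bilQ m w' (unitv (dual_idx k))"
      using j(1) by (intro eq isQ_unitv)
    moreover have "bilQ m v (unitv (dual_idx k)) = v k" for v :: "nat \<Rightarrow> 'a"
      using bilQ_unitv[OF m j(1)] j(2) True by (simp add: dual_idx_dual_idx)
    ultimately show ?thesis by simp
  next
    case False
    have one: "1 \<in> {1..2*m-1}" using m by auto
    then have "bilQ m w (unitv 1) = bilQ m w' (unitv 1)" by (intro eq isQ_unitv)
    then have "2 * w 1 = 2 * w' 1" using bilQ_unitv[OF m one, of w] bilQ_unitv[OF m one, of w'] by simp
    then have "w 1 = w' 1" by (metis half_mult_two[OF two])
    then show ?thesis using False Q unfolding isQ_def by (cases "k = 1") auto
  qed
qed

definition adj_vec :: "nat \<Rightarrow> (nat \<Rightarrow> 'a::comm_ring_1) \<Rightarrow> nat \<Rightarrow> 'a" where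
  "adj_vec m a = (\<lambda>k. if k = 1 then half * a 1 else if k \<in> {2..2*m-1} then a (dual_idx k) else 0)"

lemma isQ_adj_vec: "1 \<le> m \<Longrightarrow> isQ m (adj_vec m a)"
  unfolding isQ_def adj_vec_def by auto

lemma bilQ_adj_vec:
  assumes two: "(2::'a::comm_ring_1) dvd 1" and m: "1 \<le> m"
  shows "bilQ m (adj_vec m a) z = linQ m (a::nat \<Rightarrow> 'a) z"
proof -
  have "(\<Sum>i = 2..2*m-1. adj_vec m a i * z (dual_idx i)) = (\<Sum>i = 2..2*m-1. a (dual_idx i) * z (dual_idx i))"
    by (rule sum.cong) (auto simp: adj_vec_def)
  also have "\<dots> = (\<Sum>i = 2..2*m-1. a i * z i)"
    using sum_dual_idx[OF odd_two_m_minus_one[OF m], of "\<lambda>i. a i * z i"] by simp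
  finally show ?thesis
    unfolding bilQ_eq[OF m] linQ_eq[OF m] using two_mult_half[OF two]
    by (simp add: adj_vec_def mult.assoc[symmetric])
qed

lemma bilQ_smult: "bilQ m (\<lambda>k. c * w k) z = c * bilQ m w z"
  unfolding bilQ_def by (simp add: sum_distrib_left mult.assoc)

lemma linQ_smult: "linQ m a (\<lambda>k. c * w k) = c * linQ m a w"
  unfolding linQ_def by (simp add: sum_distrib_left algebra_simps)

lemma adjQ_linQ:
  assumes two: "(2::'a::comm_ring_1) dvd 1" and m: "1 \<le> m"
  shows "adjQ m (linQ m a) c = (\<lambda>k. c * adj_vec m (a::nat \<Rightarrow> 'a) k)"
  unfolding adjQ_def
proof (rule the_equality)
  show "isQ m (\<lambda>k. c * adj_vec m a k) \<and> (\<forall>z. isQ m z \<longrightarrow> bilQ m (\<lambda>k. c * adj_vec m a k) z = c * linQ m a z)"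
    using isQ_adj_vec[OF m, of a] by (auto simp: isQ_def bilQ_smult bilQ_adj_vec[OF two m])
next
  fix w assume "isQ m w \<and> (\<forall>z. isQ m z \<longrightarrow> bilQ m w z = c * linQ m a z)"
  then show "w = (\<lambda>k. c * adj_vec m a k)"
    using isQ_adj_vec[OF m, of a]
    by (intro bilQ_nondegenerate[OF two m]) (auto simp: isQ_def bilQ_smult bilQ_adj_vec[OF two m])
qed

lemma linQ_adj_vec_commute:
  assumes two: "(2::'a::comm_ring_1) dvd 1" and m: "1 \<le> m"
  shows "linQ m a (adj_vec m b) = linQ m (b::nat \<Rightarrow> 'a) (adj_vec m a)"
  using bilQ_sym[OF m] by (simp flip: bilQ_adj_vec[OF two m])

lemma linQ_cong: "(\<And>k. k \<in> {1..2*m-1} \<Longrightarrow> x k = y k) \<Longrightarrow> linQ m a x = linQ m a y"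
  unfolding linQ_def by (rule sum.cong) auto

lemma linQ_cong_left: "(\<And>k. k \<in> {1..2*m-1} \<Longrightarrow> a k = b k) \<Longrightarrow> linQ m a x = linQ m b x"
  unfolding linQ_def by (rule sum.cong) auto

lemma linQ_add_left: "linQ m (\<lambda>k. a k + b k) z = linQ m a z + linQ m b z"
  unfolding linQ_def by (simp add: sum.distrib algebra_simps)

lemma linQ_add_right: "linQ m a (\<lambda>k. x k + y k) = linQ m a x + linQ m a y"
  unfolding linQ_def by (simp add: sum.distrib algebra_simps)

lemma linQ_diff_right: "linQ m a (\<lambda>k. x k - y k) = linQ m a x - linQ m a y"
  unfolding linQ_def by (simp add: sum_subtractf algebra_simps)

lemma linQ_uminus_left: "linQ m (\<lambda>k. - a k) z = - linQ m a z"
  unfolding linQ_def by (simp add: sum_negf)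

lemma linQ_zpart: "linQ m a (zpart m v) = linQ m a v"
  by (rule linQ_cong) (simp add: zpart_def)

lemma linQ_single: "j \<in> {1..2*m-1} \<Longrightarrow> linQ m (\<lambda>k. if k = j then c else 0) x = c * x j"
proof -
  assume j: "j \<in> {1..2*m-1}"
  have "linQ m (\<lambda>k. if k = j then c else 0) x = (\<Sum>k = 1..2*m-1. if k = j then c * x k else 0)"
    unfolding linQ_def by (rule sum.cong) auto
  also have "\<dots> = c * x j" using j by simp
  finally show ?thesis .
qed

lemma linQ_unitv: "k \<in> {1..2*m-1} \<Longrightarrow> linQ m a (unitv k) = a k"
  using linQ_single[of k m 1 a] by (simp add: linQ_def unitv_def mult.commute)

lemma adj_vec_add: "adj_vec m (\<lambda>k. a k + b k) = (\<lambda>k. adj_vec m a k + adj_vec m b k)"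
  unfolding adj_vec_def by (auto simp: algebra_simps)

lemma half_linQ_adj_vec_add:
  assumes two: "(2::'a::comm_ring_1) dvd 1" and m: "1 \<le> m"
  shows "half * linQ m (\<lambda>k. a k + b k) (adj_vec m (\<lambda>k. a k + b k))
    = half * linQ m a (adj_vec m a) + linQ m a (adj_vec m b) + half * linQ m (b::nat \<Rightarrow> 'a) (adj_vec m b)"
proof -
  have "half * linQ m (\<lambda>k. a k + b k) (adj_vec m (\<lambda>k. a k + b k))
      = half * linQ m a (adj_vec m a) + half * (2 * linQ m a (adj_vec m b)) + half * linQ m b (adj_vec m b)"
    unfolding adj_vec_add linQ_add_left linQ_add_right linQ_adj_vec_commute[OF two m, of b a]
    by (simp add: algebra_simps)
  then show ?thesis by (simp only: half_mult_two[OF two])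
qed

text \<open>One definition covers both kinds of DSER transformations, since they differ only in
  which hyperbolic coordinate (\<open>x\<close> at \<open>2m\<close>, \<open>f\<close> at \<open>2m+1\<close>) plays the role of \<open>P\<close>.\<close>

definition hyp_pair :: "nat \<Rightarrow> nat \<Rightarrow> nat \<Rightarrow> bool" where
  "hyp_pair m r s \<longleftrightarrow> (r = 2*m \<and> s = 2*m+1) \<or> (r = 2*m+1 \<and> s = 2*m)"

lemma hyp_pair_dual_idx: "1 \<le> m \<Longrightarrow> hyp_pair m r s \<Longrightarrow> r = dual_idx s"
  unfolding hyp_pair_def dual_idx_def by auto

lemma hyp_pair_swap: "hyp_pair m r s \<Longrightarrow> hyp_pair m s r"
  unfolding hyp_pair_def by auto

definition dser :: "nat \<Rightarrow> nat \<Rightarrow> nat \<Rightarrow> (nat \<Rightarrow> 'a::comm_ring_1) \<Rightarrow> (nat \<Rightarrow> 'a) \<Rightarrow> nat \<Rightarrow> 'a" where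
  "dser m r s a v = (\<lambda>k. if k \<in> {1..2*m-1} then v k - v s * adj_vec m a k
     else if k = r then v r + linQ m a v - half * (v s * linQ m a (adj_vec m a))
     else if k = s then v s else 0)"

lemma E_alpha_linQ:
  assumes "(2::'a::comm_ring_1) dvd 1" "1 \<le> m"
  shows "E_alpha m (linQ m a) = dser m (2*m) (2*m+1) (a::nat \<Rightarrow> 'a)"
  unfolding E_alpha_def dser_def Let_def adjQ_linQ[OF assms] linQ_smult linQ_zpart
  by (intro ext) simp

lemma E_beta_linQ:
  assumes "(2::'a::comm_ring_1) dvd 1" "1 \<le> m"
  shows "E_beta m (linQ m b) = dser m (2*m+1) (2*m) (b::nat \<Rightarrow> 'a)"
  unfolding E_beta_def dser_def Let_def adjQ_linQ[OF assms] linQ_smult linQ_zpart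
  by (intro ext) simp

lemma DSER_gens_eq:
  assumes "(2::'a::comm_ring_1) dvd 1" "1 \<le> m"
  shows "DSER_gens m (J::'a set) = {mat_of (2*m+1) (dser m r s a) | r s a.
    hyp_pair m r s \<and> (\<forall>z. isQ m z \<longrightarrow> linQ m a z \<in> J)}"
  unfolding DSER_gens_def E_alpha_linQ[OF assms] E_beta_linQ[OF assms] hyp_pair_def by blast

context
  fixes m r s :: nat
  assumes m: "1 \<le> m" and rs: "hyp_pair m r s"
begin

lemma hyp_pair_mem: "r \<notin> {1..2*m-1}" "s \<notin> {1..2*m-1}" "r \<noteq> s" "r \<in> {2..2*m+1}" "s \<in> {2..2*m+1}"
  using rs m unfolding hyp_pair_def by auto

lemma dser_add:
  assumes two: "(2::'a::comm_ring_1) dvd 1"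
  shows "dser m r s a \<circ> dser m r s b = dser m r s (\<lambda>k. a k + b k :: 'a)"
proof
  fix v :: "nat \<Rightarrow> 'a"
  let ?g = "v s" and ?B = "\<lambda>a b. linQ m a (adj_vec m b)"
  have at_s: "dser m r s b v s = ?g"
    and at_r: "dser m r s b v r = v r + linQ m b v - half * (?g * ?B b b)"
    using hyp_pair_mem by (simp_all add: dser_def)
  have "linQ m a (dser m r s b v) = linQ m a (\<lambda>k. v k - ?g * adj_vec m b k)"
    by (rule linQ_cong) (simp add: dser_def)
  then have lin: "linQ m a (dser m r s b v) = linQ m a v - ?g * ?B a b"
    by (simp add: linQ_diff_right linQ_smult)
  have B: "half * (?g * ?B (\<lambda>k. a k + b k) (\<lambda>k. a k + b k))
      = half * (?g * ?B a a) + ?g * ?B a b + half * (?g * ?B b b)"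
    using arg_cong[where f = "\<lambda>x. ?g * x", OF half_linQ_adj_vec_add[OF two m, of a b]]
    by (simp add: algebra_simps)
  show "(dser m r s a \<circ> dser m r s b) v = dser m r s (\<lambda>k. a k + b k) v"
  proof
    fix k
    consider "k \<in> {1..2*m-1}" | "k = r" | "k = s" | "k \<notin> {1..2*m-1}" "k \<noteq> r" "k \<noteq> s"
      by blast
    then show "(dser m r s a \<circ> dser m r s b) v k = dser m r s (\<lambda>k. a k + b k) v k"
    proof cases
      case 2
      have "(dser m r s a \<circ> dser m r s b) v k
          = dser m r s b v r + linQ m a (dser m r s b v) - half * (?g * ?B a a)"
        using 2 hyp_pair_mem by (simp add: dser_def[of m r s a] at_s)
      also have "\<dots> = v r + linQ m (\<lambda>k. a k + b k) v - half * (?g * ?B (\<lambda>k. a k + b k) (\<lambda>k. a k + b k))"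
        unfolding at_r lin B by (simp add: linQ_add_left algebra_simps)
      also have "\<dots> = dser m r s (\<lambda>k. a k + b k) v k"
        using 2 hyp_pair_mem by (simp add: dser_def)
      finally show ?thesis .
    qed (use hyp_pair_mem in \<open>auto simp: dser_def adj_vec_add algebra_simps\<close>)
  qed
qed

lemma dser_zero: "clean_vec (2*m+1) v \<Longrightarrow> dser m r s (\<lambda>k. 0) v = v"
  using hyp_pair_mem unfolding dser_def clean_vec_def by (intro ext) (auto simp: adj_vec_def linQ_def)

lemma lin_endo_dser: "lin_endo (2*m+1) (dser m r s a)"
  unfolding lin_endo_def
proof (intro conjI allI impI)
  fix v :: "nat \<Rightarrow> 'a" assume "clean_vec (2*m+1) v"
  show "clean_vec (2*m+1) (dser m r s a v)"
    using hyp_pair_mem unfolding clean_vec_def dser_def by auto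
next
  fix v w :: "nat \<Rightarrow> 'a"
  show "dser m r s a (\<lambda>k. v k + w k) = (\<lambda>k. dser m r s a v k + dser m r s a w k)"
    unfolding dser_def linQ_add_right by (intro ext) (simp add: algebra_simps)
next
  fix c :: 'a and v :: "nat \<Rightarrow> 'a"
  show "dser m r s a (\<lambda>k. c * v k) = (\<lambda>k. c * dser m r s a v k)"
    unfolding dser_def linQ_smult by (intro ext) (simp add: algebra_simps)
qed

lemma dser_restrict: "dser m r s (\<lambda>k. if k \<in> {1..2*m-1} then a k else 0) = dser m r s a"
proof -
  have adj: "adj_vec m (\<lambda>k. if k \<in> {1..2*m-1} then a k else 0) = adj_vec m a"
    using m dual_idx_mem[OF odd_two_m_minus_one[OF m]] by (force simp: adj_vec_def)
  have lin: "linQ m (\<lambda>k. if k \<in> {1..2*m-1} then a k else 0) x = linQ m a x" for x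
    by (rule linQ_cong_left) simp
  show ?thesis unfolding dser_def adj lin ..
qed

lemma dser_single_one:
  assumes two: "(2::'a::comm_ring_1) dvd 1" and v: "clean_vec (2*m+1) v"
  shows "dser m r s (\<lambda>k. if k = 1 then c else 0) v = short_root r s (-(half * c)) (v::nat \<Rightarrow> 'a)"
proof -
  have one: "1 \<in> {1..2*m-1}" using m by simp
  have adj: "adj_vec m (\<lambda>k. if k = 1 then c else 0) = (\<lambda>k. if k = 1 then half * c else 0)"
    using dual_idx_mem[OF odd_two_m_minus_one[OF m]] by (force simp: adj_vec_def)
  have "v r + c * v 1 = v r - 2 * (-(half * c)) * v 1"
    using half_mult_two[OF two, of "c * v 1"] by (simp add: algebra_simps)
  then show ?thesis
    using v hyp_pair_mem unfolding dser_def short_root_def clean_vec_def adj linQ_single[OF one]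
    by (intro ext) (auto simp: algebra_simps)
qed

lemma dser_single:
  assumes p: "p \<in> {2..2*m-1}" and v: "clean_vec (2*m+1) v"
  shows "dser m r s (\<lambda>k. if k = p then c else 0) v = long_root p (dual_idx p) r s c v"
proof -
  have q: "dual_idx p \<in> {2..2*m-1}" "dual_idx p \<noteq> p"
    using p dual_idx_mem[OF odd_two_m_minus_one[OF m]] dual_idx_neq[of p] by auto
  have adj: "adj_vec m (\<lambda>k. if k = p then c else 0) = (\<lambda>k. if k = dual_idx p then c else 0)"
    using p q by (force simp: adj_vec_def dual_idx_dual_idx)
  have p1: "p \<in> {1..2*m-1}" using p by simp
  show ?thesis
    using v p q hyp_pair_mem unfolding dser_def long_root_def clean_vec_def adj linQ_single[OF p1]
    by (intro ext) (auto simp: algebra_simps)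
qed

lemma distinct_dual_idx:
  assumes p: "p \<in> {2..2*m-1}"
  shows "distinct [1, p, dual_idx p, r, s]"
  using p rs dual_idx_mem[OF odd_two_m_minus_one[OF m], of p] dual_idx_neq[of p]
  unfolding hyp_pair_def by auto

lemma lin_endo_roots:
  assumes p: "p \<in> {2..2*m-1}"
  shows "lin_endo (2*m+1) (short_root (dual_idx p) p x)" "lin_endo (2*m+1) (short_root r s x)"
    "lin_endo (2*m+1) (long_root p (dual_idx p) r s x)"
  using p rs dual_idx_mem[OF odd_two_m_minus_one[OF m], of p] unfolding hyp_pair_def
  by (auto intro!: lin_endo_short_root lin_endo_long_root)

lemma mat_of_dser_single:
  "p \<in> {2..2*m-1} \<Longrightarrow> mat_of (2*m+1) (dser m r s (\<lambda>k. if k = p then c else 0))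
    = mat_of (2*m+1) (long_root p (dual_idx p) r s c)"
  by (rule mat_of_cong) (rule dser_single)

lemma short_root_eq_long_roots:
  assumes p: "p \<in> {2..2*m-1}"
  shows "short_root (dual_idx p) p c = long_root p (dual_idx p) r s (-c) \<circ> short_root s r 1
    \<circ> long_root p (dual_idx p) r s c \<circ> short_root s r (-1) \<circ> long_root p (dual_idx p) s r c"
proof -
  have d: "distinct [1, p, dual_idx p, r, s]" "distinct [p, dual_idx p, s, r]"
    using distinct_dual_idx[OF p] by auto
  have inv: "long_root p (dual_idx p) s r (-c) \<circ> long_root p (dual_idx p) s r c = id"
    by (rule ext) (use long_root_inverse[OF d(2), of "-c"] in simp)
  have "long_root p (dual_idx p) r s (-c) \<circ> short_root s r 1 \<circ> long_root p (dual_idx p) r s c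
      \<circ> short_root s r (-1) \<circ> long_root p (dual_idx p) s r c
      = short_root (dual_idx p) p c \<circ> long_root p (dual_idx p) s r (-c) \<circ> long_root p (dual_idx p) s r c"
    using long_short_commutator[OF d(1), of "-c" 1] by simp
  also have "\<dots> = short_root (dual_idx p) p c"
    using inv by (simp add: comp_assoc)
  finally show ?thesis by simp
qed

end

lemma mmul_mat_of_short_root_inverse:
  assumes "p \<in> {2..N}" "q \<in> {2..N}" "p \<noteq> q"
  shows "mmul N (mat_of N (short_root p q c)) (mat_of N (short_root p q (-c))) = idm N"
  using assms by (intro mmul_mat_of_inverse lin_endo_short_root short_root_inverse) auto

lemma short_root_in_EO_odd_ideal:
  "p \<in> {2..2*s+1} \<Longrightarrow> c \<in> J \<Longrightarrow> mat_of (2*s+1) (short_root (dual_idx p) p c) \<in> EO_odd_ideal s J"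
  unfolding EO_odd_ideal_def EO_gens_eq by (rule gen_group_generator) auto

lemma mat_subgroup_EO_odd_ideal:
  assumes "\<And>c. c \<in> J \<Longrightarrow> -c \<in> J"
  shows "mat_subgroup (2*s+1) (EO_odd_ideal s J)"
  unfolding EO_odd_ideal_def
proof (rule mat_subgroup_gen_group)
  fix g assume "g \<in> EO_gens s J"
  then obtain p c where p: "p \<in> {2..2*s+1}" and c: "c \<in> J"
    and g: "g = mat_of (2*s+1) (short_root (dual_idx p) p c)"
    unfolding EO_gens_eq by blast
  have q: "dual_idx p \<in> {2..2*s+1}" "dual_idx p \<noteq> p"
    using p dual_idx_mem[of "2*s+1" p] dual_idx_neq[of p] by auto
  have "mat_of (2*s+1) (short_root (dual_idx p) p (-c)) \<in> EO_gens s J"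
    unfolding EO_gens_eq using p assms[OF c] by blast
  then show "clean_mat (2*s+1) g \<and> (\<exists>g'\<in>EO_gens s J. mmul (2*s+1) g g' = idm (2*s+1) \<and> mmul (2*s+1) g' g = idm (2*s+1))"
    using mmul_mat_of_short_root_inverse[OF q(1) p q(2), of c] mmul_mat_of_short_root_inverse[OF q(1) p q(2), of "-c"]
    unfolding g by auto
qed

lemma EO_odd_eq_EO_odd_ideal: "EO_odd s = EO_odd_ideal s UNIV"
  unfolding EO_odd_def EO_odd_ideal_def ..

lemma EO_gens_subset_EO_odd_ideal: "EO_gens s J \<subseteq> EO_odd_ideal s J"
  unfolding EO_odd_ideal_def EO_gens_eq by (rule gen_group_generators) auto

lemma mat_subgroup_EO_odd: "mat_subgroup (2*s+1) (EO_odd s)"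
  unfolding EO_odd_eq_EO_odd_ideal by (rule mat_subgroup_EO_odd_ideal) simp

lemma short_root_hyp_pair_mem_EO_odd:
  assumes m: "1 \<le> m" and rs: "hyp_pair m r s"
  shows "mat_of (2*m+1) (short_root r s c) \<in> EO_odd m"
proof -
  have "s \<in> {2..2*m+1}" using m rs unfolding hyp_pair_def by auto
  then show ?thesis
    unfolding EO_odd_eq_EO_odd_ideal hyp_pair_dual_idx[OF m rs] by (rule short_root_in_EO_odd_ideal) simp
qed

lemma EO_QH_eq_EO_QH_ideal: "EO_QH m = EO_QH_ideal m UNIV"
  unfolding EO_QH_def EO_QH_ideal_def ..

lemma DSER_gens_subset_EO_QH_ideal: "DSER_gens m J \<subseteq> EO_QH_ideal m J"
  unfolding EO_QH_ideal_def DSER_gens_def by (rule gen_group_generators) auto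

text \<open>Conjugation by \<open>F(\<plusminus>1)\<close> in the hyperbolic plane is the only normality that the
  comparison of generators uses.\<close>

definition hyp_conj_stable :: "nat \<Rightarrow> (nat \<Rightarrow> nat \<Rightarrow> 'a::comm_ring_1) set \<Rightarrow> bool" where
  "hyp_conj_stable m T \<longleftrightarrow> (\<forall>X\<in>T. \<forall>r s. hyp_pair m r s \<longrightarrow>
     mmul (2*m+1) (mmul (2*m+1) (mat_of (2*m+1) (short_root r s 1)) X) (mat_of (2*m+1) (short_root r s (-1))) \<in> T)"

lemma hyp_conj_stableD:
  "hyp_conj_stable m T \<Longrightarrow> X \<in> T \<Longrightarrow> hyp_pair m r s \<Longrightarrow>
    mmul (2*m+1) (mmul (2*m+1) (mat_of (2*m+1) (short_root r s 1)) X) (mat_of (2*m+1) (short_root r s (-1))) \<in> T"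
  unfolding hyp_conj_stable_def by blast

lemma hyp_conj_stableI:
  assumes "mat_subgroup (2*m+1) T"
    and "\<And>r s c. hyp_pair m r s \<Longrightarrow> mat_of (2*m+1) (short_root r s c) \<in> T"
  shows "hyp_conj_stable m T"
  using assms unfolding hyp_conj_stable_def by (simp add: mat_subgroup_mmul)

lemma hyp_conj_stable_normal_closure:
  assumes m: "1 \<le> m"
  shows "hyp_conj_stable m (normal_closure (2*m+1) (EO_odd m) H)"
  unfolding hyp_conj_stable_def
proof (intro ballI allI impI)
  fix X r s assume X: "X \<in> normal_closure (2*m+1) (EO_odd m) H" and rs: "hyp_pair m r s"
  have "r \<in> {2..2*m+1}" "s \<in> {2..2*m+1}" "r \<noteq> s" using m rs unfolding hyp_pair_def by auto
  then have inv: "mmul (2*m+1) (mat_of (2*m+1) (short_root r s 1)) (mat_of (2*m+1) (short_root r s (-1))) = idm (2*m+1)"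
    "mmul (2*m+1) (mat_of (2*m+1) (short_root r s (-1))) (mat_of (2*m+1) (short_root r s 1)) = idm (2*m+1)"
    using mmul_mat_of_short_root_inverse[of r "2*m+1" s "-1"] by (auto intro: mmul_mat_of_short_root_inverse)
  show "mmul (2*m+1) (mmul (2*m+1) (mat_of (2*m+1) (short_root r s 1)) X) (mat_of (2*m+1) (short_root r s (-1)))
      \<in> normal_closure (2*m+1) (EO_odd m) H"
    by (rule normal_closure_conjugate[OF mat_subgroup_EO_odd X short_root_hyp_pair_mem_EO_odd[OF m rs] inv])
qed

lemma hyp_conj_stable_EO_odd: "1 \<le> m \<Longrightarrow> hyp_conj_stable m (EO_odd m)"
  by (rule hyp_conj_stableI[OF mat_subgroup_EO_odd short_root_hyp_pair_mem_EO_odd])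

context
  fixes m :: nat
  assumes m: "1 \<le> m" and two: "(2::'a::comm_ring_1) dvd 1"
begin

lemma mmul_mat_of_dser_inverse:
  assumes rs: "hyp_pair m r s"
  shows "mmul (2*m+1) (mat_of (2*m+1) (dser m r s a)) (mat_of (2*m+1) (dser m r s (\<lambda>k. - a k :: 'a))) = idm (2*m+1)"
proof (rule mmul_mat_of_inverse[OF lin_endo_dser[OF m rs] lin_endo_dser[OF m rs]])
  fix v :: "nat \<Rightarrow> 'a" assume "clean_vec (2*m+1) v"
  then show "dser m r s a (dser m r s (\<lambda>k. - a k) v) = v"
    using dser_add[OF m rs two, of a "\<lambda>k. - a k"] dser_zero[OF m rs] by (simp add: fun_eq_iff)
qed

lemma mat_subgroup_EO_QH_ideal:
  assumes J: "is_ideal J"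
  shows "mat_subgroup (2*m+1) (EO_QH_ideal m (J::'a set))"
  unfolding EO_QH_ideal_def
proof (rule mat_subgroup_gen_group)
  fix g assume "g \<in> DSER_gens m J"
  then obtain r s a where rs: "hyp_pair m r s" and a: "\<forall>z. isQ m z \<longrightarrow> linQ m a z \<in> J"
    and g: "g = mat_of (2*m+1) (dser m r s a)"
    unfolding DSER_gens_eq[OF two m] by blast
  have "mat_of (2*m+1) (dser m r s (\<lambda>k. - a k)) \<in> DSER_gens m J"
    unfolding DSER_gens_eq[OF two m] using rs a ideal_uminus[OF J] by (force simp: linQ_uminus_left)
  then show "clean_mat (2*m+1) g \<and> (\<exists>g'\<in>DSER_gens m J. mmul (2*m+1) g g' = idm (2*m+1) \<and> mmul (2*m+1) g' g = idm (2*m+1))"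
    using mmul_mat_of_dser_inverse[OF rs, of a] mmul_mat_of_dser_inverse[OF rs, of "\<lambda>k. - a k"]
    unfolding g by auto
qed

lemma dser_mem_subgroup:
  assumes T: "mat_subgroup (2*m+1) T" and rs: "hyp_pair m r s"
    and single: "\<And>j c. j \<in> {1..2*m-1} \<Longrightarrow> c \<in> J \<Longrightarrow> mat_of (2*m+1) (dser m r s (\<lambda>k. if k = j then c else 0)) \<in> T"
    and a: "\<And>k. k \<in> {1..2*m-1} \<Longrightarrow> (a::nat \<Rightarrow> 'a) k \<in> J"
  shows "mat_of (2*m+1) (dser m r s a) \<in> T"
proof -
  have "mat_of (2*m+1) (dser m r s (\<lambda>k. if k \<in> K then a k else 0)) \<in> T"
    if "finite K" "K \<subseteq> {1..2*m-1}" for K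
    using that
  proof (induction K rule: finite_induct)
    case empty
    have "mat_of (2*m+1) (dser m r s (\<lambda>k. 0::'a)) = mat_of (2*m+1) id"
      by (rule mat_of_cong) (simp add: dser_zero[OF m rs])
    then show ?case using T by (simp add: mat_of_id mat_subgroup_def)
  next
    case (insert j K)
    have "dser m r s (\<lambda>k. if k \<in> insert j K then a k else 0)
        = dser m r s (\<lambda>k. if k \<in> K then a k else 0) \<circ> dser m r s (\<lambda>k. if k = j then a j else 0)"
      unfolding dser_add[OF m rs two] using insert.hyps(2) by (intro arg_cong[where f = "dser m r s"]) auto
    then have "mat_of (2*m+1) (dser m r s (\<lambda>k. if k \<in> insert j K then a k else 0))
        = mmul (2*m+1) (mat_of (2*m+1) (dser m r s (\<lambda>k. if k \<in> K then a k else 0)))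
            (mat_of (2*m+1) (dser m r s (\<lambda>k. if k = j then a j else 0)))"
      by (simp only: mat_of_comp lin_endo_dser[OF m rs])
    moreover have "mat_of (2*m+1) (dser m r s (\<lambda>k. if k = j then a j else 0)) \<in> T"
      using insert.prems a by (intro single) auto
    ultimately show ?case
      using insert T by (simp add: mat_subgroup_mmul)
  qed
  then show ?thesis using dser_restrict[OF m rs, of a] by (metis finite_atLeastAtMost order_refl)
qed

lemma mat_of_dser_single_one:
  "hyp_pair m r s \<Longrightarrow> mat_of (2*m+1) (dser m r s (\<lambda>k. if k = 1 then c else 0 :: 'a))
    = mat_of (2*m+1) (short_root r s (-(half * c)))"
  by (rule mat_of_cong) (rule dser_single_one[OF m _ two])

lemma mat_of_short_root_hyp_pair:
  assumes rs: "hyp_pair m r s"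
  shows "mat_of (2*m+1) (short_root r s (c::'a)) = mat_of (2*m+1) (dser m r s (\<lambda>k. if k = 1 then - (2 * c) else 0))"
  using mat_of_dser_single_one[OF rs, of "- (2 * c)"] half_mult_two[OF two, of c] by simp

lemma long_root_eq_commutator:
  assumes p: "p \<in> {2..2*m-1}" and rs: "hyp_pair m r s"
  shows "long_root p (dual_idx p) r s (c::'a) = short_root (dual_idx p) p (half * c) \<circ> short_root r s 1
    \<circ> short_root (dual_idx p) p (-(half * c)) \<circ> short_root r s (-1)"
  using short_root_commutator[OF distinct_dual_idx[OF m rs p], of "half * c" 1]
  by (simp add: mult.assoc[symmetric] two_mult_half[OF two])

lemma dser_single_mem_DSER_gens:
  assumes J: "is_ideal J" and rs: "hyp_pair m r s" and j: "j \<in> {1..2*m-1}" and c: "c \<in> J"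
  shows "mat_of (2*m+1) (dser m r s (\<lambda>k. if k = j then c else 0)) \<in> DSER_gens m (J::'a set)"
proof -
  have "linQ m (\<lambda>k. if k = j then c else 0) z \<in> J" for z
    unfolding linQ_single[OF j] using ideal_mult[OF J c, of "z j"] by (simp add: mult.commute)
  then show ?thesis unfolding DSER_gens_eq[OF two m] using rs by blast
qed

lemma short_root_mem_DSER_gens:
  assumes J: "is_ideal J" and rs: "hyp_pair m r s" and c: "c \<in> J"
  shows "mat_of (2*m+1) (short_root r s c) \<in> DSER_gens m (J::'a set)"
  unfolding mat_of_short_root_hyp_pair[OF rs]
  using m ideal_uminus[OF J ideal_mult[OF J c]] by (intro dser_single_mem_DSER_gens[OF J rs]) auto

lemma dser_single_mem_subgroup:
  assumes T: "mat_subgroup (2*m+1) T" and J: "is_ideal J"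
    and EO: "EO_gens m J \<subseteq> T" and stable: "hyp_conj_stable m T"
    and rs: "hyp_pair m r s" and j: "j \<in> {1..2*m-1}" and c: "c \<in> (J::'a set)"
  shows "mat_of (2*m+1) (dser m r s (\<lambda>k. if k = j then c else 0)) \<in> T"
proof -
  have short: "mat_of (2*m+1) (short_root (dual_idx p) p x) \<in> T" if "p \<in> {2..2*m+1}" "x \<in> J" for p x
    using EO that unfolding EO_gens_eq by blast
  have half: "half * c \<in> J" "-(half * c) \<in> J"
    using ideal_mult[OF J c] ideal_uminus[OF J ideal_mult[OF J c]] by auto
  show ?thesis
  proof (cases "j = 1")
    case True
    have "mat_of (2*m+1) (short_root (dual_idx s) s (-(half * c))) \<in> T"
      using m rs half unfolding hyp_pair_def by (intro short) auto
    then show ?thesis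
      unfolding True mat_of_dser_single_one[OF rs] using hyp_pair_dual_idx[OF m rs] by simp
  next
    case False
    then have p: "j \<in> {2..2*m-1}" using j by auto
    note lin = lin_endo_roots[OF m rs p]
    have eq: "mat_of (2*m+1) (dser m r s (\<lambda>k. if k = j then c else 0))
        = mmul (2*m+1) (mat_of (2*m+1) (short_root (dual_idx j) j (half * c)))
            (mmul (2*m+1) (mmul (2*m+1) (mat_of (2*m+1) (short_root r s 1))
              (mat_of (2*m+1) (short_root (dual_idx j) j (-(half * c)))))
              (mat_of (2*m+1) (short_root r s (-1))))"
      unfolding mat_of_dser_single[OF m rs p] long_root_eq_commutator[OF p rs]
      by (simp only: mat_of_comp lin_endo_comp lin mmul_assoc)
    show ?thesis
      unfolding eq using p half
      by (intro mat_subgroup_mmul[OF T] hyp_conj_stableD[OF stable _ rs] short) auto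
  qed
qed

lemma DSER_gens_subset:
  assumes T: "mat_subgroup (2*m+1) T" and J: "is_ideal J"
    and EO: "EO_gens m J \<subseteq> T" and stable: "hyp_conj_stable m T"
  shows "DSER_gens m (J::'a set) \<subseteq> T"
proof
  fix g assume "g \<in> DSER_gens m J"
  then obtain r s a where rs: "hyp_pair m r s" and a: "\<forall>z. isQ m z \<longrightarrow> linQ m a z \<in> J"
    and g: "g = mat_of (2*m+1) (dser m r s a)"
    unfolding DSER_gens_eq[OF two m] by blast
  have "a k \<in> J" if "k \<in> {1..2*m-1}" for k
    using a isQ_unitv[OF that] linQ_unitv[OF that, of a] by metis
  with dser_single_mem_subgroup[OF T J EO stable rs] show "g \<in> T"
    unfolding g by (rule dser_mem_subgroup[OF T rs])
qed

lemma EO_gens_subset: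
  assumes T: "mat_subgroup (2*m+1) T" and J: "is_ideal J"
    and DSER: "DSER_gens m J \<subseteq> T" and stable: "hyp_conj_stable m T"
  shows "EO_gens m (J::'a set) \<subseteq> T"
proof
  fix g assume "g \<in> EO_gens m J"
  then obtain p c where p: "p \<in> {2..2*m+1}" and c: "c \<in> J"
    and g: "g = mat_of (2*m+1) (short_root (dual_idx p) p c)"
    unfolding EO_gens_eq by blast
  show "g \<in> T"
  proof (cases "p \<in> {2..2*m-1}")
    case False
    then have "p = 2*m \<or> p = 2*m+1" using p by auto
    then have "hyp_pair m (dual_idx p) p" using m unfolding hyp_pair_def dual_idx_def by auto
    then show ?thesis unfolding g using short_root_mem_DSER_gens[OF J _ c] DSER by blast
  next
    case True
    obtain r s where rs: "hyp_pair m r s" unfolding hyp_pair_def by blast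
    then have sr: "hyp_pair m s r" by (rule hyp_pair_swap)
    have long: "mat_of (2*m+1) (long_root p (dual_idx p) r' s' x) \<in> T"
      if "hyp_pair m r' s'" "x \<in> J" for r' s' x
      unfolding mat_of_dser_single[OF m that(1) True, symmetric]
      using dser_single_mem_DSER_gens[OF J that(1) _ that(2)] True DSER by auto
    note lin = lin_endo_roots[OF m rs True] lin_endo_roots(2,3)[OF m sr True]
    have eq: "g = mmul (2*m+1) (mat_of (2*m+1) (long_root p (dual_idx p) r s (-c)))
        (mmul (2*m+1) (mmul (2*m+1) (mmul (2*m+1) (mat_of (2*m+1) (short_root s r 1))
          (mat_of (2*m+1) (long_root p (dual_idx p) r s c))) (mat_of (2*m+1) (short_root s r (-1))))
          (mat_of (2*m+1) (long_root p (dual_idx p) s r c)))"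
      unfolding g short_root_eq_long_roots[OF m rs True]
      by (simp only: mat_of_comp lin_endo_comp lin mmul_assoc)
    show ?thesis
      unfolding eq using c ideal_uminus[OF J c] rs sr
      by (intro mat_subgroup_mmul[OF T] hyp_conj_stableD[OF stable _ sr] long)
  qed
qed

lemma mat_subgroup_EO_QH: "mat_subgroup (2*m+1) (EO_QH m :: (nat \<Rightarrow> nat \<Rightarrow> 'a) set)"
  unfolding EO_QH_eq_EO_QH_ideal using is_ideal_UNIV by (rule mat_subgroup_EO_QH_ideal)

lemma hyp_conj_stable_EO_QH: "hyp_conj_stable m (EO_QH m :: (nat \<Rightarrow> nat \<Rightarrow> 'a) set)"
proof (rule hyp_conj_stableI[OF mat_subgroup_EO_QH])
  fix r s and c :: 'a
  assume "hyp_pair m r s"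
  then have "mat_of (2*m+1) (short_root r s c) \<in> DSER_gens m UNIV"
    by (rule short_root_mem_DSER_gens[OF is_ideal_UNIV]) simp
  then show "mat_of (2*m+1) (short_root r s c) \<in> EO_QH m"
    using DSER_gens_subset_EO_QH_ideal unfolding EO_QH_eq_EO_QH_ideal by blast
qed

lemma EO_QH_eq_EO_odd: "EO_QH m = (EO_odd m :: (nat \<Rightarrow> nat \<Rightarrow> 'a) set)"
proof
  have "DSER_gens m (UNIV::'a set) \<subseteq> EO_odd m"
    by (rule DSER_gens_subset[OF mat_subgroup_EO_odd is_ideal_UNIV
          EO_gens_subset_EO_odd_ideal[of m UNIV, folded EO_odd_eq_EO_odd_ideal] hyp_conj_stable_EO_odd[OF m]])
  then show "EO_QH m \<subseteq> (EO_odd m :: (nat \<Rightarrow> nat \<Rightarrow> 'a) set)"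
    unfolding EO_QH_def by (rule gen_group_least[OF mat_subgroup_EO_odd])
next
  have "EO_gens m (UNIV::'a set) \<subseteq> EO_QH m"
    by (rule EO_gens_subset[OF mat_subgroup_EO_QH is_ideal_UNIV
          DSER_gens_subset_EO_QH_ideal[of m UNIV, folded EO_QH_eq_EO_QH_ideal] hyp_conj_stable_EO_QH])
  then show "EO_odd m \<subseteq> (EO_QH m :: (nat \<Rightarrow> nat \<Rightarrow> 'a) set)"
    unfolding EO_odd_def by (rule gen_group_least[OF mat_subgroup_EO_QH])
qed

lemma EO_QH_rel_eq: "EO_QH_rel m I = normal_closure (2*m+1) (EO_odd m) (EO_QH_ideal m (I::'a set))"
  unfolding EO_QH_rel_def EO_QH_eq_EO_odd ..

lemma DSER_gens_subset_EO_odd_rel: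
  assumes I: "is_ideal I"
  shows "DSER_gens m I \<subseteq> EO_odd_rel m (I::'a set)"
  unfolding EO_odd_rel_def
proof (rule DSER_gens_subset[OF _ I _ hyp_conj_stable_normal_closure[OF m]])
  have H: "mat_subgroup (2*m+1) (EO_odd_ideal m I)"
    using ideal_uminus[OF I] by (rule mat_subgroup_EO_odd_ideal)
  show "mat_subgroup (2*m+1) (normal_closure (2*m+1) (EO_odd m) (EO_odd_ideal m I))"
    by (rule mat_subgroup_normal_closure[OF mat_subgroup_EO_odd H])
  show "EO_gens m I \<subseteq> normal_closure (2*m+1) (EO_odd m) (EO_odd_ideal m I)"
    using EO_gens_subset_EO_odd_ideal subset_normal_closure[OF mat_subgroup_EO_odd H] by blast
qed

lemma EO_gens_subset_EO_QH_rel: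
  assumes I: "is_ideal I"
  shows "EO_gens m I \<subseteq> EO_QH_rel m (I::'a set)"
  unfolding EO_QH_rel_eq
proof (rule EO_gens_subset[OF _ I _ hyp_conj_stable_normal_closure[OF m]])
  have H: "mat_subgroup (2*m+1) (EO_QH_ideal m I)"
    using I by (rule mat_subgroup_EO_QH_ideal)
  show "mat_subgroup (2*m+1) (normal_closure (2*m+1) (EO_odd m) (EO_QH_ideal m I))"
    by (rule mat_subgroup_normal_closure[OF mat_subgroup_EO_odd H])
  show "DSER_gens m I \<subseteq> normal_closure (2*m+1) (EO_odd m) (EO_QH_ideal m I)"
    using DSER_gens_subset_EO_QH_ideal subset_normal_closure[OF mat_subgroup_EO_odd H] by blast
qed

end

theorem mainTheorem6:
  fixes I :: "'a::comm_ring_1 set" and m :: nat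
  assumes "(2::'a) dvd 1"
    and "is_ideal I"
    and "m \<ge> 1"
  shows "EO_QH_rel m I = EO_odd_rel m I"
proof
  have G: "mat_subgroup (2*m+1) (EO_odd m :: (nat \<Rightarrow> nat \<Rightarrow> 'a) set)"
    by (rule mat_subgroup_EO_odd)
  show "EO_QH_rel m I \<subseteq> EO_odd_rel m I"
    unfolding EO_QH_rel_eq[OF assms(3,1)] EO_QH_ideal_def EO_odd_rel_def
    using G mat_subgroup_EO_odd_ideal[OF ideal_uminus[OF assms(2)]]
      DSER_gens_subset_EO_odd_rel[OF assms(3,1,2), unfolded EO_odd_rel_def]
    by (rule normal_closure_gen_group_subset)
  show "EO_odd_rel m I \<subseteq> EO_QH_rel m I"
    unfolding EO_QH_rel_eq[OF assms(3,1)] EO_odd_rel_def EO_odd_ideal_def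
    using G mat_subgroup_EO_QH_ideal[OF assms(3,1,2)]
      EO_gens_subset_EO_QH_rel[OF assms(3,1,2), unfolded EO_QH_rel_eq[OF assms(3,1)]]
    by (rule normal_closure_gen_group_subset)
qed

end
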